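(* Let $s\geq1$ be an integer, $\alpha'>1>\alpha>0$ and $\theta_1,\theta_2>0$. If $X$ has distribution $W(\alpha',\theta_1)$ and $Y$ has distribution $W(\alpha,\theta_2)$, then $X\leq_{s\text{-IFR}}Y$, i.e. the $W(\alpha',\theta_1)$ distribution is more $s$-IFR than the $W(\alpha,\theta_2)$ distribution.
   Context: $W(\alpha,\theta)$ denotes the Weibull distribution with shape parameter $\alpha$ and scale parameter $\theta$, whose tail is $e^{-(x/\theta)^\alpha}$, $x\geq0$. For a nonnegative random variable $X$ with density $f_X$: $\overline{T}_{X,0}=f_X$, $\widetilde{\mu}_{X,0}=1$, and for $s\geq1$, $x\geq0$, $\overline{T}_{X,s}(x)=\frac{1}{\widetilde{\mu}_{X,s-1}}\int_x^\infty \overline{T}_{X,s-1}(t)\,dt$ with $\widetilde{\mu}_{X,s}=\int_0^\infty \overline{T}_{X,s}(t)\,dt$, and $\overline{T}_{X,s}(x)=1$ for $x<0$. We write $X\leq_{s\text{-IFR}}Y$ ("$X$ is more $s$-IFR than $Y$") if $c_s(x)=\overline{T}_{Y,s}^{-1}(\overline{T}_{X,s}(x))$ is convex. *)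

theory Defs
  imports "HOL-Analysis.Analysis"
begin

definition weibull_density :: "real \<Rightarrow> real \<Rightarrow> real \<Rightarrow> real" where
  "weibull_density \<alpha> \<theta> x =
     (if x > 0 then (\<alpha> / \<theta>) * (x / \<theta>) powr (\<alpha> - 1) * exp (- ((x / \<theta>) powr \<alpha>)) else 0)"

fun iter_tail :: "(real \<Rightarrow> real) \<Rightarrow> nat \<Rightarrow> real \<Rightarrow> real"
  and iter_mu :: "(real \<Rightarrow> real) \<Rightarrow> nat \<Rightarrow> real" where
  "iter_tail f 0 x = f x"
| "iter_tail f (Suc s) x =
     (if x < 0 then 1
      else (LBINT t:{x..}. iter_tail f s t) / iter_mu f s)"
| "iter_mu f 0 = 1"
| "iter_mu f (Suc s) = (LBINT t:{0..}. iter_tail f (Suc s) t)"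

definition c_fun :: "(real \<Rightarrow> real) \<Rightarrow> (real \<Rightarrow> real) \<Rightarrow> nat \<Rightarrow> real \<Rightarrow> real" where
  "c_fun fX fY s x = the_inv_into {0..} (iter_tail fY s) (iter_tail fX s x)"

definition s_IFR_le :: "nat \<Rightarrow> (real \<Rightarrow> real) \<Rightarrow> (real \<Rightarrow> real) \<Rightarrow> bool" where
  "s_IFR_le s fX fY \<longleftrightarrow> convex_on {0..} (c_fun fX fY s)"

end

theory Submission
  imports Defs "HOL-Real_Asymp.Real_Asymp"
begin

text \<open>Write \<open>T\<^sub>X\<close>, \<open>T\<^sub>Y\<close> for the iterated tails of order \<open>s\<close>. Then
  \<open>c\<^sub>s = H\<^sub>Y\<^sup>-\<^sup>1 \<circ> H\<^sub>X\<close> with the cumulative hazards \<open>H = - ln T\<close>, so it suffices that \<open>H\<^sub>X\<close> is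
  convex and \<open>H\<^sub>Y\<close> concave, i.e. that \<open>T\<^sub>X\<close> has an increasing and \<open>T\<^sub>Y\<close> a decreasing hazard
  rate. For \<open>s = 1\<close> these are the Weibull survival functions, whose hazard
  \<open>(\<alpha>/\<theta>) (x/\<theta>)\<^bsup>\<alpha>-1\<^esup>\<close> increases for \<open>\<alpha> > 1\<close> and decreases for \<open>\<alpha> < 1\<close>. Passing from \<open>T\<close> to
  its equilibrium tail \<open>\<integral>\<^sub>x\<^sup>\<infinity> T / \<integral>\<^sub>0\<^sup>\<infinity> T\<close> preserves the direction of monotonicity: the new
  hazard is \<open>T x / \<integral>\<^sub>0\<^sup>\<infinity> T (x + u) du\<close>, and each ratio \<open>T (x + u) / T x\<close> is monotone in \<open>x\<close>.\<close>

lemma set_integrable_atLeast_iff_greaterThan: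
  fixes f :: "real \<Rightarrow> real"
  shows "set_integrable lborel {x..} f \<longleftrightarrow> set_integrable lborel {x<..} f"
  by (rule set_integrable_discrete_difference[where X="{x}"]) auto

lemma set_integral_atLeast_eq_greaterThan:
  fixes f :: "real \<Rightarrow> real"
  shows "(LBINT t:{x..}. f t) = (LBINT t:{x<..}. f t)"
  by (rule set_integral_discrete_difference[where X="{x}"]) auto

lemma set_integral_atLeast_FTC_nonneg:
  fixes f F :: "real \<Rightarrow> real"
  assumes deriv: "\<And>t. a < t \<Longrightarrow> (F has_real_derivative f t) (at t)"
    and cont: "\<And>t. a < t \<Longrightarrow> isCont f t"
    and nonneg: "\<And>t. a < t \<Longrightarrow> 0 \<le> f t"
    and lim_a: "(F \<longlongrightarrow> F a) (at_right a)"
    and lim_top: "(F \<longlongrightarrow> L) at_top"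
  shows "set_integrable lborel {a..} f" and "(LBINT t:{a..}. f t) = L - F a"
proof -
  have "((F \<circ> real_of_ereal) \<longlongrightarrow> F a) (at_right (ereal a))"
    "((F \<circ> real_of_ereal) \<longlongrightarrow> L) (at_left \<infinity>)"
    unfolding ereal_tendsto_simps by (fact lim_a lim_top)+
  from interval_integral_FTC_nonneg[OF _ _ _ _ this] deriv cont nonneg
  have "set_integrable lborel (einterval (ereal a) \<infinity>) f" "(LBINT t=ereal a..\<infinity>. f t) = L - F a"
    by auto
  moreover have "einterval (ereal a) \<infinity> = {a<..}"
    by (auto simp: einterval_def)
  ultimately show "set_integrable lborel {a..} f" "(LBINT t:{a..}. f t) = L - F a"
    by (simp_all add: set_integrable_atLeast_iff_greaterThan set_integral_atLeast_eq_greaterThan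
        interval_integral_to_infinity_eq)
qed

lemma set_integrable_inverse_square_atLeast_0:
  "set_integrable lborel {0..} (\<lambda>t::real. 1 / (1 + t)^2)"
proof (rule set_integral_atLeast_FTC_nonneg[where F="\<lambda>t. - 1 / (1 + t)"])
  fix t :: real assume "0 < t"
  then show "((\<lambda>t. - 1 / (1 + t)) has_real_derivative 1 / (1 + t)^2) (at t)"
    by (auto intro!: derivative_eq_intros simp: power2_eq_square)
  show "isCont (\<lambda>t. 1 / (1 + t)^2) t"
    using \<open>0 < t\<close> by (auto intro!: continuous_intros)
qed (simp, real_asymp, real_asymp)

lemma set_integral_atLeast_shift:
  fixes f :: "real \<Rightarrow> real"
  assumes "set_integrable lborel {z..} f"
  shows "set_integrable lborel {0..} (\<lambda>u. f (z + u))"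
    and "(LBINT u:{0..}. f (z + u)) = (LBINT t:{z..}. f t)"
proof -
  have shift: "(\<lambda>u. indicator {z..} (z + 1 * u) *\<^sub>R f (z + 1 * u)) = (\<lambda>u. indicator {0..} u *\<^sub>R f (z + u))"
    by (auto simp: indicator_def)
  have "integrable lborel (\<lambda>t. indicator {z..} t *\<^sub>R f t)"
    using assms unfolding set_integrable_def .
  from lborel_integrable_real_affine[OF this, of 1 z]
  show "set_integrable lborel {0..} (\<lambda>u. f (z + u))"
    unfolding set_integrable_def shift by simp
  have "(LBINT t:{z..}. f t) = \<bar>1\<bar> *\<^sub>R integral\<^sup>L lborel (\<lambda>u. indicator {z..} (z + 1 * u) *\<^sub>R f (z + 1 * u))"
    unfolding set_lebesgue_integral_def by (rule lborel_integral_real_affine) simp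
  then show "(LBINT u:{0..}. f (z + u)) = (LBINT t:{z..}. f t)"
    unfolding set_lebesgue_integral_def shift by simp
qed

lemma convex_on_atLeast_if_greaterThan:
  fixes f :: "real \<Rightarrow> real"
  assumes cont: "continuous_on {a..} f" and convex: "convex_on {a<..} f"
  shows "convex_on {a..} f"
proof (rule convex_onI)
  fix t x y :: real
  assume t: "0 < t" "t < 1" and xy: "x \<in> {a..}" "y \<in> {a..}"
  define g where "g e = (1 - t) * f (x + e) + t * f (y + e) - f ((1 - t) * (x + e) + t * (y + e))" for e
  have "(1 - t) * a \<le> (1 - t) * x" "t * a \<le> t * y"
    using t xy by (intro mult_left_mono; simp)+
  then have "a \<le> (1 - t) * x + t * y"
    by (simp add: algebra_simps)
  then have "continuous_on {0..} g"
    unfolding g_def using xy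
    by (intro continuous_intros continuous_on_compose2[OF cont]) (auto simp: algebra_simps)
  then have "(g \<longlongrightarrow> g 0) (at_right 0)"
    by (auto simp: continuous_on_def intro: tendsto_within_subset)
  moreover have "\<forall>\<^sub>F e in at_right 0. 0 \<le> g e"
  proof (rule eventually_at_rightI[of 0 1])
    fix e :: real assume "e \<in> {0<..<1}"
    then show "0 \<le> g e"
      using convex_onD[OF convex, of t "x + e" "y + e"] t xy by (simp add: g_def)
  qed simp
  ultimately have "0 \<le> g 0"
    by (rule tendsto_lowerbound) simp
  then show "f ((1 - t) *\<^sub>R x + t *\<^sub>R y) \<le> (1 - t) * f x + t * f y"
    by (simp add: g_def)
qed simp

lemma continuous_on_atLeast_bounded_above:
  fixes g :: "real \<Rightarrow> real"
  assumes cont: "continuous_on {a..} g" and lim: "(g \<longlongrightarrow> l) at_top"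
  shows "\<exists>K. \<forall>x\<ge>a. g x \<le> K"
proof -
  have "\<forall>\<^sub>F x in at_top. g x < l + 1"
    using lim by (rule order_tendstoD) simp
  then obtain N where N: "\<And>x. N \<le> x \<Longrightarrow> g x < l + 1"
    by (auto simp: eventually_at_top_linorder)
  have "continuous_on {a..max a N} g"
    by (rule continuous_on_subset[OF cont]) auto
  from continuous_attains_sup[OF compact_Icc _ this]
  obtain x0 where x0: "\<forall>y\<in>{a..max a N}. g y \<le> g x0"
    by auto
  have "g x \<le> max (l + 1) (g x0)" if "a \<le> x" for x
  proof (cases "x \<le> max a N")
    case True
    then show ?thesis
      using x0 that by (simp add: le_max_iff_disj)
  next
    case False
    then show ?thesis
      using N[of x] by (simp add: le_max_iff_disj)
  qed
  then show ?thesis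
    by blast
qed

text \<open>Only values on \<open>[0, \<infinity>)\<close> matter, as \<open>iter_tail\<close> is \<open>1\<close> on the negative axis. All
  polynomial moments are required because each passage to the equilibrium tail uses up one.\<close>
definition pos_rapid_decay :: "(real \<Rightarrow> real) \<Rightarrow> bool" where
  "pos_rapid_decay T \<longleftrightarrow> continuous_on {0..} T \<and> (\<forall>x\<ge>0. 0 < T x)
     \<and> (\<forall>m::nat. \<exists>K. \<forall>x\<ge>0. (1 + x)^m * T x \<le> K)"

definition tail_integral :: "(real \<Rightarrow> real) \<Rightarrow> real \<Rightarrow> real" where
  "tail_integral T x = (LBINT t:{x..}. T t)"

definition equilibrium_tail :: "(real \<Rightarrow> real) \<Rightarrow> real \<Rightarrow> real" where
  "equilibrium_tail T x = tail_integral T x / tail_integral T 0"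

lemma pos_rapid_decay_continuous_on: "pos_rapid_decay T \<Longrightarrow> continuous_on {0..} T"
  unfolding pos_rapid_decay_def by blast

lemma pos_rapid_decay_pos: "pos_rapid_decay T \<Longrightarrow> 0 \<le> x \<Longrightarrow> 0 < T x"
  unfolding pos_rapid_decay_def by blast

lemma pos_rapid_decay_cong:
  assumes "\<And>x. 0 \<le> x \<Longrightarrow> F x = T x"
  shows "pos_rapid_decay F \<longleftrightarrow> pos_rapid_decay T"
proof -
  have "continuous_on {0..} F = continuous_on {0..} T"
    by (rule continuous_on_cong) (simp_all add: assms)
  then show ?thesis
    unfolding pos_rapid_decay_def using assms by simp
qed

lemma pos_rapid_decay_eventually_le:
  assumes "pos_rapid_decay T" "0 < e"
  obtains y where "0 \<le> y" "T y \<le> e"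
proof -
  obtain K where K: "\<And>x. 0 \<le> x \<Longrightarrow> (1 + x)^1 * T x \<le> K"
    using assms(1) unfolding pos_rapid_decay_def by blast
  define y where "y = max 0 (K / e)"
  have "K / e \<le> y" "0 \<le> y"
    by (simp_all add: y_def)
  then have y: "0 \<le> y" "K \<le> e * (1 + y)"
    using \<open>0 < e\<close> by (simp_all add: divide_le_eq algebra_simps)
  then have "(1 + y) * T y \<le> (1 + y) * e"
    using K[of y] by (simp add: algebra_simps)
  with y show thesis
    by (intro that[of y]) simp_all
qed

lemma set_integrable_moment:
  assumes "pos_rapid_decay T"
  shows "set_integrable lborel {0..} (\<lambda>t. (1 + t)^m * T t)"
proof -
  obtain K where K: "\<And>x. 0 \<le> x \<Longrightarrow> (1 + x)^(m + 2) * T x \<le> K"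
    using assms unfolding pos_rapid_decay_def by blast
  show ?thesis
  proof (rule set_integrable_bound)
    show "set_integrable lborel {0..} (\<lambda>t. K * (1 / (1 + t)^2))"
      by (rule set_integrable_mult_right[OF set_integrable_inverse_square_atLeast_0])
    show "set_borel_measurable lborel {0..} (\<lambda>t. (1 + t)^m * T t)"
      unfolding set_borel_measurable_def measurable_lborel2
      by (rule borel_measurable_continuous_on_indicator)
        (auto intro!: continuous_intros pos_rapid_decay_continuous_on[OF assms])
    show "AE x in lborel. x \<in> {0..} \<longrightarrow> norm ((1 + x)^m * T x) \<le> norm (K * (1 / (1 + x)^2))"
    proof (rule AE_I2, rule impI)
      fix x :: real assume "x \<in> {0..}"
      then have x: "0 \<le> x" by simp
      have "(1 + x)^m * T x * (1 + x)^2 \<le> K"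
        using K[OF x] unfolding power_add by (simp only: mult_ac)
      then have "(1 + x)^m * T x \<le> K / (1 + x)^2"
        using x by (simp add: field_simps)
      moreover have "K / (1 + x)^2 \<le> \<bar>K\<bar> / (1 + x)^2"
        by (simp add: divide_right_mono)
      ultimately show "norm ((1 + x)^m * T x) \<le> norm (K * (1 / (1 + x)^2))"
        using pos_rapid_decay_pos[OF assms x] x by simp
    qed
  qed
qed

lemma set_integrable_atLeast:
  assumes "pos_rapid_decay T" "0 \<le> x"
  shows "set_integrable lborel {x..} T"
  using set_integrable_subset[OF set_integrable_moment[OF assms(1), of 0]] assms(2) by simp

lemma tail_integral_split:
  assumes "pos_rapid_decay T" "0 \<le> x"
  shows "tail_integral T x = tail_integral T 0 - (LBINT t=ereal 0..ereal x. T t)"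
proof -
  have "{0..} = {0..x} \<union> {x<..}"
    using assms(2) by auto
  moreover have "set_integrable lborel {0..x} T" "set_integrable lborel {x<..} T"
    using assms by (auto intro: set_integrable_subset[OF set_integrable_atLeast[of T 0]])
  moreover have "(LBINT t:{0..x} \<union> {x<..}. T t) = (LBINT t:{0..x}. T t) + (LBINT t:{x<..}. T t)"
    by (rule set_integral_Un) (auto intro: calculation)
  ultimately have "tail_integral T 0 = (LBINT t:{0..x}. T t) + (LBINT t:{x<..}. T t)"
    unfolding tail_integral_def by simp
  then show ?thesis
    using assms(2)
    by (simp add: tail_integral_def interval_integral_Icc set_integral_atLeast_eq_greaterThan)
qed

lemma tail_integral_has_real_derivative_within:
  assumes T: "pos_rapid_decay T" and x: "0 \<le> x"
  shows "(tail_integral T has_real_derivative - T x) (at x within {0..})"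
proof -
  have "((\<lambda>u. LBINT t=ereal 0..ereal u. T t) has_vector_derivative T x) (at x within {0..x + 1})"
    using x by (intro interval_integral_FTC2 continuous_on_subset[OF pos_rapid_decay_continuous_on[OF T]])
      auto
  then have "((\<lambda>u. tail_integral T 0 - (LBINT t=ereal 0..ereal u. T t)) has_real_derivative - T x)
      (at x within {0..x + 1})"
    by (auto simp: has_real_derivative_iff_has_vector_derivative intro!: derivative_eq_intros)
  moreover have "at x within {0..x + 1} = at x within {0..}"
    by (rule at_within_nhd[where S="{..<x + 1}"]) auto
  ultimately have "((\<lambda>u. tail_integral T 0 - (LBINT t=ereal 0..ereal u. T t)) has_real_derivative - T x)
      (at x within {0..})"
    by (simp only:)
  then show ?thesis
  proof (rule has_field_derivative_transform_within[where d=1])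
    fix u :: real assume "u \<in> {0..}"
    then show "tail_integral T 0 - (LBINT t=ereal 0..ereal u. T t) = tail_integral T u"
      by (intro sym[OF tail_integral_split[OF T]]) simp
  qed (use x in simp_all)
qed

lemma tail_integral_has_real_derivative:
  assumes "pos_rapid_decay T" "0 < x"
  shows "(tail_integral T has_real_derivative - T x) (at x)"
proof -
  have "at x within {0..} = at x"
    using assms(2) by (intro at_within_interior) simp
  then show ?thesis
    using tail_integral_has_real_derivative_within[OF assms(1), of x] assms(2) by simp
qed

lemma tail_integral_continuous_on:
  "pos_rapid_decay T \<Longrightarrow> continuous_on {0..} (tail_integral T)"
  by (rule DERIV_continuous_on[OF tail_integral_has_real_derivative_within]) simp_all

lemma tail_integral_pos:
  assumes T: "pos_rapid_decay T" and x: "0 \<le> x"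
  shows "0 < tail_integral T x"
proof -
  have "0 \<le> T t" if "x + 1 \<le> t" for t
    using pos_rapid_decay_pos[OF T, of t] x that by simp
  then have "0 \<le> tail_integral T (x + 1)"
    unfolding tail_integral_def set_lebesgue_integral_def
    by (intro integral_nonneg_AE AE_I2) (simp add: indicator_def)
  also have "tail_integral T (x + 1) < tail_integral T x"
  proof (rule DERIV_neg_imp_decreasing_open[where f="tail_integral T"])
    fix z assume "x < z" "z < x + 1"
    then have "0 < z"
      using x by simp
    then show "\<exists>y. (tail_integral T has_real_derivative y) (at z) \<and> y < 0"
      using tail_integral_has_real_derivative[OF T] pos_rapid_decay_pos[OF T, of z] by fastforce
  next
    show "continuous_on {x..x + 1} (tail_integral T)"
      using x by (intro continuous_on_subset[OF tail_integral_continuous_on[OF T]]) auto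
  qed simp
  finally show ?thesis .
qed

lemma tail_integral_moment_bound:
  assumes T: "pos_rapid_decay T" and x: "0 \<le> x"
  shows "(1 + x)^m * tail_integral T x \<le> (LBINT t:{0..}. (1 + t)^m * T t)"
proof -
  have I: "set_integrable lborel {0..} (\<lambda>t. (1 + t)^m * T t)"
    by (rule set_integrable_moment[OF T])
  have nonneg: "0 \<le> T t" if "0 \<le> t" for t
    using pos_rapid_decay_pos[OF T that] by simp
  have "(1 + x)^m * tail_integral T x = (LBINT t:{x..}. (1 + x)^m * T t)"
    unfolding tail_integral_def by simp
  also have "\<dots> \<le> (LBINT t:{x..}. (1 + t)^m * T t)"
    using x
    by (intro set_integral_mono set_integrable_mult_right set_integrable_atLeast[OF T]
        set_integrable_subset[OF I] mult_right_mono power_mono nonneg) auto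
  also have "\<dots> \<le> (LBINT t:{0..}. (1 + t)^m * T t)"
    using x nonneg I set_integrable_subset[OF I, of "{x..}"]
    unfolding set_lebesgue_integral_def set_integrable_def
    by (intro integral_mono) (auto simp: indicator_def)
  finally show ?thesis .
qed

lemma pos_rapid_decay_equilibrium_tail:
  assumes T: "pos_rapid_decay T"
  shows "pos_rapid_decay (equilibrium_tail T)"
  unfolding pos_rapid_decay_def equilibrium_tail_def
proof (intro conjI allI impI)
  have G0: "0 < tail_integral T 0"
    by (rule tail_integral_pos[OF T order_refl])
  show "continuous_on {0..} (\<lambda>x. tail_integral T x / tail_integral T 0)"
    by (intro continuous_intros tail_integral_continuous_on[OF T]) (use G0 in simp)
  show "0 < tail_integral T x / tail_integral T 0" if "0 \<le> x" for x
    using tail_integral_pos[OF T that] G0 by simp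
  fix m :: nat
  show "\<exists>K. \<forall>x\<ge>0. (1 + x)^m * (tail_integral T x / tail_integral T 0) \<le> K"
  proof (intro exI allI impI)
    fix x :: real assume "0 \<le> x"
    have "(1 + x)^m * (tail_integral T x / tail_integral T 0) = (1 + x)^m * tail_integral T x / tail_integral T 0"
      by simp
    also have "\<dots> \<le> (LBINT t:{0..}. (1 + t)^m * T t) / tail_integral T 0"
      using G0 by (intro divide_right_mono tail_integral_moment_bound[OF T \<open>0 \<le> x\<close>]) simp
    finally show "(1 + x)^m * (tail_integral T x / tail_integral T 0) \<le> \<dots>" .
  qed
qed

definition has_hazard :: "(real \<Rightarrow> real) \<Rightarrow> (real \<Rightarrow> real) \<Rightarrow> bool" where
  "has_hazard T h \<longleftrightarrow> (\<forall>x>0. 0 < h x \<and> (T has_real_derivative - (h x * T x)) (at x))"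

text \<open>With \<open>\<sigma> = 1\<close> this says that \<open>T\<close> has an increasing failure rate, with \<open>\<sigma> = -1\<close> a
  decreasing one.\<close>
definition monotone_hazard :: "real \<Rightarrow> (real \<Rightarrow> real) \<Rightarrow> bool" where
  "monotone_hazard \<sigma> T \<longleftrightarrow> (\<exists>h. has_hazard T h \<and> mono_on {0<..} (\<lambda>x. \<sigma> * h x))"

lemma monotone_hazard_cong:
  assumes "\<And>x. 0 \<le> x \<Longrightarrow> F x = T x"
  shows "monotone_hazard \<sigma> F \<longleftrightarrow> monotone_hazard \<sigma> T"
proof -
  have "(F has_real_derivative d) (at x) \<longleftrightarrow> (T has_real_derivative d) (at x)" if "0 < x" for x d
  proof
    assume "(F has_real_derivative d) (at x)"
    then show "(T has_real_derivative d) (at x)"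
      by (rule has_field_derivative_transform_within_open[where S="{0<..}"]) (use that assms in auto)
  next
    assume "(T has_real_derivative d) (at x)"
    then show "(F has_real_derivative d) (at x)"
      by (rule has_field_derivative_transform_within_open[where S="{0<..}"]) (use that assms in auto)
  qed
  then show ?thesis
    unfolding monotone_hazard_def has_hazard_def using assms by simp
qed

lemma has_hazard_strict_decreasing:
  assumes T: "pos_rapid_decay T" and h: "has_hazard T h" and "0 \<le> p" "p < q"
  shows "T q < T p"
proof (rule DERIV_neg_imp_decreasing_open[OF \<open>p < q\<close>])
  fix z assume "p < z" "z < q"
  then have "0 < z"
    using \<open>0 \<le> p\<close> by simp
  then show "\<exists>y. (T has_real_derivative y) (at z) \<and> y < 0"
    using h pos_rapid_decay_pos[OF T, of z] unfolding has_hazard_def by force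
qed (use assms in \<open>auto intro: continuous_on_subset[OF pos_rapid_decay_continuous_on[OF T]]\<close>)

lemma mult_le_mult_if_mult_ln_le:
  fixes a b \<sigma> :: real
  assumes "0 < a" "0 < b" "\<sigma> * ln a \<le> \<sigma> * ln b"
  shows "\<sigma> * a \<le> \<sigma> * b"
  using assms by (cases \<sigma> "0::real" rule: linorder_cases) (simp_all add: mult_le_cancel_left)

lemma has_hazard_DERIV_ln:
  assumes "has_hazard T h" "0 < x" "0 < T x"
  shows "((\<lambda>x. ln (T x)) has_real_derivative - h x) (at x)"
proof -
  have "(T has_real_derivative - (h x * T x)) (at x)"
    using assms(1,2) unfolding has_hazard_def by blast
  from DERIV_chain2[OF DERIV_ln[OF \<open>0 < T x\<close>] this]
  have "((\<lambda>x. ln (T x)) has_real_derivative inverse (T x) * - (h x * T x)) (at x)" .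
  moreover have "inverse (T x) * - (h x * T x) = - h x"
    using \<open>0 < T x\<close> by simp
  ultimately show ?thesis
    by metis
qed

text \<open>The idea behind the preservation of monotone hazard rates: for \<open>t \<ge> 0\<close> the ratio
  \<open>T (x + t) / T x\<close> is monotone in \<open>x\<close>, since its logarithm has derivative
  \<open>h x - h (x + t)\<close>.\<close>
lemma monotone_hazard_shift_ratio:
  assumes T: "pos_rapid_decay T" and h: "has_hazard T h" and mono: "mono_on {0<..} (\<lambda>x. \<sigma> * h x)"
    and "0 \<le> x" "x \<le> y" "0 \<le> t"
  shows "\<sigma> * (T (y + t) * T x) \<le> \<sigma> * (T (x + t) * T y)"
proof -
  define k where "k z = \<sigma> * (ln (T z) - ln (T (z + t)))" for z
  have pos: "0 < T z" if "0 \<le> z" for z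
    using pos_rapid_decay_pos[OF T that] .
  have "k x \<le> k y"
  proof (rule DERIV_nonneg_imp_increasing_open[OF \<open>x \<le> y\<close>])
    fix z assume "x < z" "z < y"
    then have z: "0 < z" "0 < z + t"
      using \<open>0 \<le> x\<close> \<open>0 \<le> t\<close> by auto
    have "((\<lambda>z. ln (T (z + t))) has_real_derivative - h (z + t)) (at z)"
      using has_hazard_DERIV_ln[OF h z(2) pos] z by (simp add: DERIV_shift)
    then have "(k has_real_derivative \<sigma> * (- h z - - h (z + t))) (at z)"
      unfolding k_def using has_hazard_DERIV_ln[OF h z(1) pos] z
      by (intro DERIV_cmult DERIV_diff) simp_all
    moreover have "\<sigma> * h z \<le> \<sigma> * h (z + t)"
      using mono z \<open>0 \<le> t\<close> by (auto elim!: mono_onD)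
    ultimately show "\<exists>d. (k has_real_derivative d) (at z) \<and> 0 \<le> d"
      by (intro exI[of _ "\<sigma> * (- h z - - h (z + t))"]) (simp add: algebra_simps)
  next
    have "continuous_on {x..y} T" "continuous_on {x..y} (\<lambda>z. T (z + t))"
      using \<open>0 \<le> x\<close> \<open>0 \<le> t\<close>
      by (auto intro!: continuous_on_subset[OF pos_rapid_decay_continuous_on[OF T]]
          continuous_on_compose2[OF pos_rapid_decay_continuous_on[OF T]] continuous_intros)
    moreover have "T z \<noteq> 0" "T (z + t) \<noteq> 0" if "z \<in> {x..y}" for z
      using pos[of z] pos[of "z + t"] that \<open>0 \<le> x\<close> \<open>0 \<le> t\<close> by auto
    ultimately show "continuous_on {x..y} k"
      unfolding k_def by (intro continuous_intros) auto
  qed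
  then have "\<sigma> * ln (T x) + \<sigma> * ln (T (y + t)) \<le> \<sigma> * ln (T y) + \<sigma> * ln (T (x + t))"
    unfolding k_def right_diff_distrib by linarith
  moreover have "0 < T x" "0 < T y" "0 < T (x + t)" "0 < T (y + t)"
    using pos \<open>0 \<le> x\<close> \<open>x \<le> y\<close> \<open>0 \<le> t\<close> by simp_all
  ultimately have "\<sigma> * ln (T (y + t) * T x) \<le> \<sigma> * ln (T (x + t) * T y)"
    by (simp add: ln_mult distrib_left)
  then show ?thesis
    by (rule mult_le_mult_if_mult_ln_le[rotated 2])
      (simp_all add: \<open>0 < T x\<close> \<open>0 < T y\<close> \<open>0 < T (x + t)\<close> \<open>0 < T (y + t)\<close>)
qed

lemma equilibrium_tail_has_hazard:
  assumes T: "pos_rapid_decay T"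
  shows "has_hazard (equilibrium_tail T) (\<lambda>x. T x / tail_integral T x)"
  unfolding has_hazard_def
proof (intro allI impI conjI)
  fix x :: real assume "0 < x"
  have G: "0 < tail_integral T 0" "0 < tail_integral T x"
    using \<open>0 < x\<close> by (auto intro!: tail_integral_pos[OF T])
  show "0 < T x / tail_integral T x"
    using pos_rapid_decay_pos[OF T, of x] \<open>0 < x\<close> G by simp
  have "(equilibrium_tail T has_real_derivative - T x / tail_integral T 0) (at x)"
    unfolding equilibrium_tail_def
    using DERIV_cdivide[OF tail_integral_has_real_derivative[OF T \<open>0 < x\<close>]] by simp
  moreover have "- T x / tail_integral T 0 = - (T x / tail_integral T x * equilibrium_tail T x)"
    using G by (simp add: equilibrium_tail_def)
  ultimately show "(equilibrium_tail T has_real_derivative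
      - (T x / tail_integral T x * equilibrium_tail T x)) (at x)"
    by simp
qed

lemma equilibrium_tail_monotone_hazard:
  assumes T: "pos_rapid_decay T" and "monotone_hazard \<sigma> T"
  shows "monotone_hazard \<sigma> (equilibrium_tail T)"
proof -
  obtain h where h: "has_hazard T h" and mono: "mono_on {0<..} (\<lambda>x. \<sigma> * h x)"
    using \<open>monotone_hazard \<sigma> T\<close> unfolding monotone_hazard_def by blast
  have "mono_on {0<..} (\<lambda>x. \<sigma> * (T x / tail_integral T x))"
  proof (rule mono_onI)
    fix x y :: real assume "x \<in> {0<..}" "y \<in> {0<..}" "x \<le> y"
    then have "0 \<le> x" "0 \<le> y" by simp_all
    have shift: "tail_integral T z = (LBINT u:{0..}. T (z + u))"
      "set_integrable lborel {0..} (\<lambda>u. T (z + u))" if "0 \<le> z" for z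
      using set_integral_atLeast_shift[OF set_integrable_atLeast[OF T that]]
      by (simp_all add: tail_integral_def)
    have "\<sigma> * (tail_integral T y * T x) = (LBINT u:{0..}. \<sigma> * (T (y + u) * T x))"
      using shift(1)[OF \<open>0 \<le> y\<close>] by simp
    also have "\<dots> \<le> (LBINT u:{0..}. \<sigma> * (T (x + u) * T y))"
    proof (rule set_integral_mono)
      show "set_integrable lborel {0..} (\<lambda>u. \<sigma> * (T (y + u) * T x))"
        "set_integrable lborel {0..} (\<lambda>u. \<sigma> * (T (x + u) * T y))"
        using shift(2)[OF \<open>0 \<le> y\<close>] shift(2)[OF \<open>0 \<le> x\<close>]
        by (simp_all add: set_integrable_mult_right set_integrable_mult_left)
      show "\<sigma> * (T (y + u) * T x) \<le> \<sigma> * (T (x + u) * T y)" if "u \<in> {0..}" for u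
        using that \<open>0 \<le> x\<close> \<open>x \<le> y\<close> by (intro monotone_hazard_shift_ratio[OF T h mono]) simp_all
    qed
    also have "\<dots> = \<sigma> * (tail_integral T x * T y)"
      using shift(1)[OF \<open>0 \<le> x\<close>] by simp
    finally have "\<sigma> * (tail_integral T y * T x) / (tail_integral T x * tail_integral T y)
        \<le> \<sigma> * (tail_integral T x * T y) / (tail_integral T x * tail_integral T y)"
      using tail_integral_pos[OF T \<open>0 \<le> x\<close>] tail_integral_pos[OF T \<open>0 \<le> y\<close>]
      by (intro divide_right_mono) simp_all
    then show "\<sigma> * (T x / tail_integral T x) \<le> \<sigma> * (T y / tail_integral T y)"
      using tail_integral_pos[OF T \<open>0 \<le> x\<close>] tail_integral_pos[OF T \<open>0 \<le> y\<close>]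
      by (simp add: field_simps)
  qed
  then show ?thesis
    unfolding monotone_hazard_def using equilibrium_tail_has_hazard[OF T] by blast
qed

lemma monotone_hazard_convex_on_neg_ln:
  assumes T: "pos_rapid_decay T" and "monotone_hazard \<sigma> T"
  shows "convex_on {0..} (\<lambda>x. - \<sigma> * ln (T x))"
proof (rule convex_on_atLeast_if_greaterThan)
  have "T x \<noteq> 0" if "x \<in> {0..}" for x
    using pos_rapid_decay_pos[OF T, of x] that by simp
  then show "continuous_on {0..} (\<lambda>x. - \<sigma> * ln (T x))"
    by (intro continuous_intros pos_rapid_decay_continuous_on[OF T]) auto
  obtain h where h: "has_hazard T h" and mono: "mono_on {0<..} (\<lambda>x. \<sigma> * h x)"
    using \<open>monotone_hazard \<sigma> T\<close> unfolding monotone_hazard_def by blast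
  show "convex_on {0<..} (\<lambda>x. - \<sigma> * ln (T x))"
  proof (rule convex_on_realI[where f'="\<lambda>x. \<sigma> * h x"])
    fix x :: real assume "x \<in> {0<..}"
    then have "((\<lambda>x. ln (T x)) has_real_derivative - h x) (at x)"
      using has_hazard_DERIV_ln[OF h] pos_rapid_decay_pos[OF T, of x] by simp
    then show "((\<lambda>x. - \<sigma> * ln (T x)) has_real_derivative \<sigma> * h x) (at x)"
      using DERIV_cmult[of "\<lambda>x. ln (T x)" "- h x" x UNIV "- \<sigma>"] by simp
  next
    fix x y :: real assume "x \<in> {0<..}" "y \<in> {0<..}" "x \<le> y"
    then show "\<sigma> * h x \<le> \<sigma> * h y"
      by (rule mono_onD[OF mono])
  qed simp
qed

lemma the_inv_into_survival:
  assumes T: "pos_rapid_decay T" and h: "has_hazard T h" and "T 0 = 1" and "0 < v" "v \<le> 1"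
  shows "0 \<le> the_inv_into {0..} T v" and "T (the_inv_into {0..} T v) = v"
proof -
  have inj: "inj_on T {0..}"
    by (rule linorder_inj_onI') (auto dest: has_hazard_strict_decreasing[OF T h])
  obtain y where "0 \<le> y" "T y \<le> v"
    using pos_rapid_decay_eventually_le[OF T \<open>0 < v\<close>] .
  moreover have "continuous_on {0..y} T"
    by (rule continuous_on_subset[OF pos_rapid_decay_continuous_on[OF T]]) auto
  ultimately obtain z where "0 \<le> z" "T z = v"
    using IVT2'[of T y v 0] \<open>T 0 = 1\<close> \<open>v \<le> 1\<close> by auto
  then show "0 \<le> the_inv_into {0..} T v" "T (the_inv_into {0..} T v) = v"
    using the_inv_into_f_eq[OF inj] by auto
qed

lemma convex_on_the_inv_into_comp:
  assumes X: "pos_rapid_decay TX" "monotone_hazard 1 TX" "TX 0 = 1"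
    and Y: "pos_rapid_decay TY" "monotone_hazard (-1) TY" "TY 0 = 1"
  shows "convex_on {0..} (\<lambda>x. the_inv_into {0..} TY (TX x))"
proof -
  obtain hX hY where hX: "has_hazard TX hX" and hY: "has_hazard TY hY"
    using X(2) Y(2) unfolding monotone_hazard_def by blast
  define c where "c x = the_inv_into {0..} TY (TX x)" for x
  have c: "0 \<le> c x" "TY (c x) = TX x" if "0 \<le> x" for x
  proof -
    have "TX x \<le> 1"
      using has_hazard_strict_decreasing[OF X(1) hX order_refl, of x] X(3) that
      by (cases "x = 0") auto
    then show "0 \<le> c x" "TY (c x) = TX x"
      unfolding c_def using the_inv_into_survival[OF Y(1) hY Y(3)] pos_rapid_decay_pos[OF X(1) that]
      by simp_all
  qed
  have convex_X: "convex_on {0..} (\<lambda>x. - ln (TX x))"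
    using monotone_hazard_convex_on_neg_ln[OF X(1,2)] by simp
  have concave_Y: "convex_on {0..} (\<lambda>x. ln (TY x))"
    using monotone_hazard_convex_on_neg_ln[OF Y(1,2)] by simp
  show ?thesis
    unfolding c_def[symmetric]
  proof (rule convex_onI)
    fix t p q :: real assume t: "0 < t" "t < 1" and "p \<in> {0..}" "q \<in> {0..}"
    then have pq: "0 \<le> p" "0 \<le> q" by simp_all
    define z where "z = (1 - t) * p + t * q"
    define w where "w = (1 - t) * c p + t * c q"
    have "0 \<le> z" "0 \<le> w"
      using t pq c[OF pq(1)] c[OF pq(2)] by (simp_all add: z_def w_def)
    txt \<open>Concavity of \<open>ln \<circ> TY\<close> and convexity of \<open>- ln \<circ> TX\<close> squeeze \<open>ln (TY w)\<close> below
      \<open>ln (TY (c z))\<close>; since \<open>TY\<close> decreases, \<open>c z \<le> w\<close>.\<close>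
    have "ln (TY w) \<le> (1 - t) * ln (TY (c p)) + t * ln (TY (c q))"
      using convex_onD[OF concave_Y, of t "c p" "c q"] t c pq by (simp add: w_def)
    also have "\<dots> \<le> ln (TY (c z))"
      using convex_onD[OF convex_X, of t p q] t c pq \<open>0 \<le> z\<close> by (simp add: z_def)
    finally have "TY w \<le> TY (c z)"
      using pos_rapid_decay_pos[OF Y(1) \<open>0 \<le> w\<close>] pos_rapid_decay_pos[OF Y(1) c(1)[OF \<open>0 \<le> z\<close>]]
      by simp
    then have "c z \<le> w"
      using has_hazard_strict_decreasing[OF Y(1) hY \<open>0 \<le> w\<close>, of "c z"] by linarith
    then show "c ((1 - t) *\<^sub>R p + t *\<^sub>R q) \<le> (1 - t) * c p + t * c q"
      by (simp add: z_def w_def)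
  qed simp
qed

lemma iter_tail_Suc_Suc:
  "0 \<le> x \<Longrightarrow> iter_tail f (Suc (Suc n)) x = equilibrium_tail (iter_tail f (Suc n)) x"
  unfolding equilibrium_tail_def tail_integral_def iter_tail.simps(2)[of f "Suc n" x] iter_mu.simps(2)
  by simp

lemma iter_tail_monotone_hazard:
  assumes "pos_rapid_decay (iter_tail f 1)" "monotone_hazard \<sigma> (iter_tail f 1)" "iter_tail f 1 0 = 1"
  shows "pos_rapid_decay (iter_tail f (Suc n)) \<and> monotone_hazard \<sigma> (iter_tail f (Suc n))
    \<and> iter_tail f (Suc n) 0 = 1"
proof (induction n)
  case 0
  then show ?case
    using assms by (simp del: iter_tail.simps)
next
  case (Suc n)
  then have T: "pos_rapid_decay (iter_tail f (Suc n))"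
    by blast
  have "equilibrium_tail (iter_tail f (Suc n)) 0 = 1"
    using tail_integral_pos[OF T order_refl] by (simp add: equilibrium_tail_def)
  then show ?case
    using Suc pos_rapid_decay_equilibrium_tail[OF T] equilibrium_tail_monotone_hazard[OF T]
    by (simp add: pos_rapid_decay_cong[OF iter_tail_Suc_Suc] monotone_hazard_cong[OF iter_tail_Suc_Suc]
        iter_tail_Suc_Suc[of 0] del: iter_tail.simps)
qed

definition weibull_survival :: "real \<Rightarrow> real \<Rightarrow> real \<Rightarrow> real" where
  "weibull_survival \<alpha> \<theta> x = exp (- ((x / \<theta>) powr \<alpha>))"

definition weibull_hazard :: "real \<Rightarrow> real \<Rightarrow> real \<Rightarrow> real" where
  "weibull_hazard \<alpha> \<theta> x = \<alpha> / \<theta> * (x / \<theta>) powr (\<alpha> - 1)"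

lemma weibull_survival_has_hazard:
  assumes "0 < \<alpha>" "0 < \<theta>"
  shows "has_hazard (weibull_survival \<alpha> \<theta>) (weibull_hazard \<alpha> \<theta>)"
  unfolding has_hazard_def
proof (intro allI impI conjI)
  fix x :: real assume "0 < x"
  then show "0 < weibull_hazard \<alpha> \<theta> x"
    using assms by (simp add: weibull_hazard_def)
  have "(weibull_survival \<alpha> \<theta> has_real_derivative
      exp (- ((x / \<theta>) powr \<alpha>)) * - (\<alpha> * (x / \<theta>) powr (\<alpha> - 1) * (1 / \<theta>))) (at x)"
    unfolding weibull_survival_def using \<open>0 < x\<close> assms by (auto intro!: derivative_eq_intros)
  then show "(weibull_survival \<alpha> \<theta> has_real_derivative
      - (weibull_hazard \<alpha> \<theta> x * weibull_survival \<alpha> \<theta> x)) (at x)"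
    by (simp add: weibull_hazard_def weibull_survival_def mult_ac)
qed

lemma weibull_density_eq_hazard_mult_survival:
  "0 < x \<Longrightarrow> weibull_density \<alpha> \<theta> x = weibull_hazard \<alpha> \<theta> x * weibull_survival \<alpha> \<theta> x"
  by (simp add: weibull_density_def weibull_hazard_def weibull_survival_def)

lemma weibull_survival_pos_rapid_decay:
  assumes "0 < \<alpha>" "0 < \<theta>"
  shows "pos_rapid_decay (weibull_survival \<alpha> \<theta>)"
  unfolding pos_rapid_decay_def
proof (intro conjI allI impI)
  show cont: "continuous_on {0..} (weibull_survival \<alpha> \<theta>)"
    unfolding weibull_survival_def using assms
    by (intro continuous_intros continuous_on_powr') auto
  show "0 < weibull_survival \<alpha> \<theta> x" for x
    by (simp add: weibull_survival_def)
  fix m :: nat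
  have "((\<lambda>x. (1 + x)^m * weibull_survival \<alpha> \<theta> x) \<longlongrightarrow> 0) at_top"
    unfolding weibull_survival_def using assms by real_asymp
  moreover have "continuous_on {0..} (\<lambda>x. (1 + x)^m * weibull_survival \<alpha> \<theta> x)"
    by (intro continuous_intros cont)
  ultimately show "\<exists>K. \<forall>x\<ge>0. (1 + x)^m * weibull_survival \<alpha> \<theta> x \<le> K"
    by (intro continuous_on_atLeast_bounded_above)
qed

lemma iter_tail_weibull_density_one:
  assumes "0 < \<alpha>" "0 < \<theta>" "0 \<le> x"
  shows "iter_tail (weibull_density \<alpha> \<theta>) 1 x = weibull_survival \<alpha> \<theta> x"
proof -
  have S: "has_hazard (weibull_survival \<alpha> \<theta>) (weibull_hazard \<alpha> \<theta>)"
    "pos_rapid_decay (weibull_survival \<alpha> \<theta>)"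
    using assms by (simp_all add: weibull_survival_has_hazard weibull_survival_pos_rapid_decay)
  have "(LBINT t:{x..}. weibull_density \<alpha> \<theta> t) = 0 - (- weibull_survival \<alpha> \<theta> x)"
  proof (rule set_integral_atLeast_FTC_nonneg(2)[where F="\<lambda>t. - weibull_survival \<alpha> \<theta> t"])
    fix t :: real assume "x < t"
    then have "0 < t"
      using assms(3) by simp
    then show "((\<lambda>t. - weibull_survival \<alpha> \<theta> t) has_real_derivative weibull_density \<alpha> \<theta> t) (at t)"
      using S(1) DERIV_minus[of "weibull_survival \<alpha> \<theta>"]
      by (force simp: has_hazard_def weibull_density_eq_hazard_mult_survival)
    have "\<forall>\<^sub>F u in nhds t. weibull_density \<alpha> \<theta> u = weibull_hazard \<alpha> \<theta> u * weibull_survival \<alpha> \<theta> u"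
      using eventually_nhds_in_open[of "{0<..}" t] \<open>0 < t\<close>
      by (auto simp: weibull_density_eq_hazard_mult_survival elim!: eventually_mono)
    moreover have "isCont (\<lambda>u. weibull_hazard \<alpha> \<theta> u * weibull_survival \<alpha> \<theta> u) t"
      unfolding weibull_hazard_def weibull_survival_def using \<open>0 < t\<close> assms
      by (intro continuous_intros) simp_all
    ultimately show "isCont (weibull_density \<alpha> \<theta>) t"
      by (simp add: isCont_cong)
    show "0 \<le> weibull_density \<alpha> \<theta> t"
      using assms by (simp add: weibull_density_def)
  next
    have "(weibull_survival \<alpha> \<theta> \<longlongrightarrow> weibull_survival \<alpha> \<theta> x) (at x within {0..})"
      using pos_rapid_decay_continuous_on[OF S(2)] assms(3) by (metis atLeast_iff continuous_on_def)
    then have "(weibull_survival \<alpha> \<theta> \<longlongrightarrow> weibull_survival \<alpha> \<theta> x) (at_right x)"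
      by (rule tendsto_within_subset) (use assms(3) in auto)
    then show "((\<lambda>t. - weibull_survival \<alpha> \<theta> t) \<longlongrightarrow> - weibull_survival \<alpha> \<theta> x) (at_right x)"
      by (rule tendsto_minus)
    show "((\<lambda>t. - weibull_survival \<alpha> \<theta> t) \<longlongrightarrow> 0) at_top"
      unfolding weibull_survival_def using assms(1,2) by real_asymp
  qed
  moreover have "iter_tail (weibull_density \<alpha> \<theta>) 0 = weibull_density \<alpha> \<theta>"
    by (rule ext) simp
  ultimately show ?thesis
    using assms(3) by simp
qed

lemma weibull_survival_increasing_hazard:
  assumes "1 < \<alpha>" "0 < \<theta>"
  shows "monotone_hazard 1 (weibull_survival \<alpha> \<theta>)"
  unfolding monotone_hazard_def
proof (intro exI conjI)
  show "has_hazard (weibull_survival \<alpha> \<theta>) (weibull_hazard \<alpha> \<theta>)"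
    using assms by (simp add: weibull_survival_has_hazard)
  show "mono_on {0<..} (\<lambda>x. 1 * weibull_hazard \<alpha> \<theta> x)"
    using assms
    by (auto intro!: mono_onI mult_left_mono powr_mono2 divide_right_mono simp: weibull_hazard_def)
qed

lemma weibull_survival_decreasing_hazard:
  assumes "0 < \<alpha>" "\<alpha> < 1" "0 < \<theta>"
  shows "monotone_hazard (-1) (weibull_survival \<alpha> \<theta>)"
  unfolding monotone_hazard_def
proof (intro exI conjI)
  show "has_hazard (weibull_survival \<alpha> \<theta>) (weibull_hazard \<alpha> \<theta>)"
    using assms by (simp add: weibull_survival_has_hazard)
  show "mono_on {0<..} (\<lambda>x. -1 * weibull_hazard \<alpha> \<theta> x)"
    using assms
    by (auto intro!: mono_onI mult_left_mono powr_mono2' divide_right_mono simp: weibull_hazard_def)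
qed

lemma iter_tail_weibull_density:
  assumes "0 < \<alpha>" "0 < \<theta>" "monotone_hazard \<sigma> (weibull_survival \<alpha> \<theta>)"
  shows "pos_rapid_decay (iter_tail (weibull_density \<alpha> \<theta>) (Suc n))
    \<and> monotone_hazard \<sigma> (iter_tail (weibull_density \<alpha> \<theta>) (Suc n))
    \<and> iter_tail (weibull_density \<alpha> \<theta>) (Suc n) 0 = 1"
proof (rule iter_tail_monotone_hazard)
  note one = iter_tail_weibull_density_one[OF assms(1,2)]
  show "pos_rapid_decay (iter_tail (weibull_density \<alpha> \<theta>) 1)"
    using weibull_survival_pos_rapid_decay[OF assms(1,2)] by (simp only: pos_rapid_decay_cong[OF one])
  show "monotone_hazard \<sigma> (iter_tail (weibull_density \<alpha> \<theta>) 1)"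
    using assms(3) by (simp only: monotone_hazard_cong[OF one])
  show "iter_tail (weibull_density \<alpha> \<theta>) 1 0 = 1"
    by (simp only: one[OF order_refl]) (simp add: weibull_survival_def)
qed

theorem proposition4:
  fixes s :: nat and \<alpha> \<alpha>' \<theta>1 \<theta>2 :: real
  assumes "s \<ge> 1" and "\<alpha>' > 1" and "1 > \<alpha>" and "\<alpha> > 0"
    and "\<theta>1 > 0" and "\<theta>2 > 0"
  shows "s_IFR_le s (weibull_density \<alpha>' \<theta>1) (weibull_density \<alpha> \<theta>2)"
proof -
  obtain n where s: "s = Suc n"
    using \<open>s \<ge> 1\<close> by (cases s) auto
  have X: "pos_rapid_decay (iter_tail (weibull_density \<alpha>' \<theta>1) s)
    \<and> monotone_hazard 1 (iter_tail (weibull_density \<alpha>' \<theta>1) s)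
    \<and> iter_tail (weibull_density \<alpha>' \<theta>1) s 0 = 1"
    unfolding s using assms by (intro iter_tail_weibull_density weibull_survival_increasing_hazard) simp_all
  have Y: "pos_rapid_decay (iter_tail (weibull_density \<alpha> \<theta>2) s)
    \<and> monotone_hazard (-1) (iter_tail (weibull_density \<alpha> \<theta>2) s)
    \<and> iter_tail (weibull_density \<alpha> \<theta>2) s 0 = 1"
    unfolding s using assms by (intro iter_tail_weibull_density weibull_survival_decreasing_hazard) simp_all
  show ?thesis
    unfolding s_IFR_le_def c_fun_def using X Y by (blast intro: convex_on_the_inv_into_comp)
qed

end
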